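(* For the modular data of the quantum double of $S_3$, each of the trace two modular invariants $Z_3,Z_{23},Z_{32},Z_{45},Z_{54},Z_{(45)},Z_{(54)}$ has, up to equivalence, exactly one matching nimrep.
   Context: Primaries $0,\dots,7$, all self-conjugate, with $S=\frac16\begin{pmatrix}1&1&2&2&2&2&3&3\\1&1&2&2&2&2&-3&-3\\2&2&4&-2&-2&-2&0&0\\2&2&-2&4&-2&-2&0&0\\2&2&-2&-2&-2&4&0&0\\2&2&-2&-2&4&-2&0&0\\3&-3&0&0&0&0&3&-3\\3&-3&0&0&0&0&-3&3\end{pmatrix}$, fusion coefficients $N_{\lambda\mu}^\nu=\sum_\rho S_{\lambda\rho}S_{\mu\rho}\overline{S_{\nu\rho}}/S_{0\rho}$. Matrices are written as $\sum Z_{\lambda\mu}\chi_\lambda\chi_\mu^*$, and for linear forms $s,t$ in the $\chi$'s, $st^*$ is the matrix of products of coefficients. $Z_3=|\chi_0+\chi_1+\chi_2+\chi_3|^2+\chi_2\chi_3^*+\chi_3\chi_2^*-|\chi_2|^2-|\chi_3|^2$. With $s_2=\chi_0+\chi_1+2\chi_2$, $s_3=\chi_0+\chi_1+2\chi_3$, $s_4=\chi_0+\chi_2+\chi_6$, $s_5=\chi_0+\chi_3+\chi_6$: $Z_{ij}=s_is_j^*$. $Z_{(45)}=(\chi_0+\chi_3)(\chi_0+\chi_2)^*+\chi_1\chi_6^*+\chi_3\chi_6^*+\chi_6\chi_1^*+\chi_6\chi_2^*+|\chi_7|^2$, $Z_{(54)}=Z_{(45)}^t$. A nimrep of dimension $n$: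 non-negative integer $n\times n$ matrices $G_\lambda$ with $G_0=I$, $G_{\bar\lambda}=G_\lambda^t$, $G_\lambda G_\mu=\sum_\nu N_{\lambda\mu}^\nu G_\nu$; nimreps are equivalent if conjugate by a common permutation matrix. $\mathrm{Exp}(Z)$ is the multiset with $Z_{\mu\mu}$ copies of $\mu$. A nimrep matches $Z$ if $n=\mathrm{Tr}\,Z$ and the $G_\lambda$ are simultaneously unitarily diagonalisable with joint eigenvalues $(S_{\lambda\mu}/S_{0\mu})_\lambda$, $\mu$ running through $\mathrm{Exp}(Z)$ with multiplicity. *)

theory Defs
  imports Complex_Main
begin

text \<open>Modular data of the quantum double of S3. Primaries are 0..7 (all self-conjugate).
  Matrices are functions nat \<Rightarrow> nat \<Rightarrow> _, only entries with indices in range matter.\<close>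

definition S_int :: "int list list" where
  "S_int = [[1,1,2,2,2,2,3,3],
            [1,1,2,2,2,2,-3,-3],
            [2,2,4,-2,-2,-2,0,0],
            [2,2,-2,4,-2,-2,0,0],
            [2,2,-2,-2,-2,4,0,0],
            [2,2,-2,-2,4,-2,0,0],
            [3,-3,0,0,0,0,3,-3],
            [3,-3,0,0,0,0,-3,3]]"

definition S :: "nat \<Rightarrow> nat \<Rightarrow> real" where
  "S l m = real_of_int (S_int ! l ! m) / 6"

text \<open>Fusion coefficients N_{l m}^v = sum_r S_{l r} S_{m r} conj(S_{v r}) / S_{0 r} (S is real).\<close>
definition N :: "nat \<Rightarrow> nat \<Rightarrow> nat \<Rightarrow> real" where
  "N l m v = (\<Sum>r<8. S l r * S m r * S v r / S 0 r)"

text \<open>Linear forms in the characters as coefficient vectors; st^* as outer product.\<close>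
definition e :: "nat \<Rightarrow> nat \<Rightarrow> int" where
  "e a = (\<lambda>i. if i = a then 1 else 0)"

definition outer :: "(nat \<Rightarrow> int) \<Rightarrow> (nat \<Rightarrow> int) \<Rightarrow> nat \<Rightarrow> nat \<Rightarrow> int" where
  "outer s t = (\<lambda>i j. s i * t j)"

definition E :: "nat \<Rightarrow> nat \<Rightarrow> nat \<Rightarrow> nat \<Rightarrow> int" where
  "E a b = outer (e a) (e b)"

definition s2 :: "nat \<Rightarrow> int" where "s2 = (\<lambda>i. e 0 i + e 1 i + 2 * e 2 i)"
definition s3 :: "nat \<Rightarrow> int" where "s3 = (\<lambda>i. e 0 i + e 1 i + 2 * e 3 i)"
definition s4 :: "nat \<Rightarrow> int" where "s4 = (\<lambda>i. e 0 i + e 2 i + e 6 i)"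
definition s5 :: "nat \<Rightarrow> int" where "s5 = (\<lambda>i. e 0 i + e 3 i + e 6 i)"

definition Z3 :: "nat \<Rightarrow> nat \<Rightarrow> int" where
  "Z3 = (\<lambda>i j. outer (\<lambda>k. e 0 k + e 1 k + e 2 k + e 3 k) (\<lambda>k. e 0 k + e 1 k + e 2 k + e 3 k) i j
          + E 2 3 i j + E 3 2 i j - E 2 2 i j - E 3 3 i j)"

definition Z23 :: "nat \<Rightarrow> nat \<Rightarrow> int" where "Z23 = outer s2 s3"
definition Z32 :: "nat \<Rightarrow> nat \<Rightarrow> int" where "Z32 = outer s3 s2"
definition Z45 :: "nat \<Rightarrow> nat \<Rightarrow> int" where "Z45 = outer s4 s5"
definition Z54 :: "nat \<Rightarrow> nat \<Rightarrow> int" where "Z54 = outer s5 s4"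

definition Zp45 :: "nat \<Rightarrow> nat \<Rightarrow> int" where
  "Zp45 = (\<lambda>i j. outer (\<lambda>k. e 0 k + e 3 k) (\<lambda>k. e 0 k + e 2 k) i j
          + E 1 6 i j + E 3 6 i j + E 6 1 i j + E 6 2 i j + E 7 7 i j)"

definition Zp54 :: "nat \<Rightarrow> nat \<Rightarrow> int" where
  "Zp54 = (\<lambda>i j. Zp45 j i)"

definition trace8 :: "(nat \<Rightarrow> nat \<Rightarrow> int) \<Rightarrow> int" where
  "trace8 Z = (\<Sum>m<8. Z m m)"

text \<open>A nimrep of dimension n: G l is an n x n non-negative integer matrix for each primary l<8.
  All primaries are self-conjugate, so G_{bar l} = G_l^t says G_l is symmetric.\<close>
definition nimrep :: "nat \<Rightarrow> (nat \<Rightarrow> nat \<Rightarrow> nat \<Rightarrow> nat) \<Rightarrow> bool" where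
  "nimrep n G \<longleftrightarrow>
     (\<forall>i<n. \<forall>j<n. G 0 i j = (if i = j then 1 else 0)) \<and>
     (\<forall>l<8. \<forall>i<n. \<forall>j<n. G l i j = G l j i) \<and>
     (\<forall>l<8. \<forall>m<8. \<forall>i<n. \<forall>j<n.
        real (\<Sum>k<n. G l i k * G m k j) = (\<Sum>v<8. N l m v * real (G v i j)))"

definition nimrep_equiv :: "nat \<Rightarrow> (nat \<Rightarrow> nat \<Rightarrow> nat \<Rightarrow> nat) \<Rightarrow> (nat \<Rightarrow> nat \<Rightarrow> nat \<Rightarrow> nat) \<Rightarrow> bool" where
  "nimrep_equiv n G H \<longleftrightarrow>
     (\<exists>p. bij_betw p {..<n} {..<n} \<and> (\<forall>l<8. \<forall>i<n. \<forall>j<n. H l i j = G l (p i) (p j)))"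

definition unitary_mat :: "nat \<Rightarrow> (nat \<Rightarrow> nat \<Rightarrow> complex) \<Rightarrow> bool" where
  "unitary_mat n U \<longleftrightarrow>
     (\<forall>i<n. \<forall>j<n. (\<Sum>k<n. cnj (U k i) * U k j) = (if i = j then 1 else 0))"

text \<open>G matches Z: n = Tr Z and there is a unitary U with U^* G_l U diagonal with diagonal entries
  S_{l f(i)}/S_{0 f(i)}, where f lists Exp(Z) with multiplicity.\<close>
definition matches :: "(nat \<Rightarrow> nat \<Rightarrow> int) \<Rightarrow> nat \<Rightarrow> (nat \<Rightarrow> nat \<Rightarrow> nat \<Rightarrow> nat) \<Rightarrow> bool" where
  "matches Z n G \<longleftrightarrow> int n = trace8 Z \<and>
     (\<exists>U f. unitary_mat n U \<and> (\<forall>i<n. f i < (8::nat)) \<and>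
        (\<forall>m<8. int (card {i. i < n \<and> f i = m}) = Z m m) \<and>
        (\<forall>l<8. \<forall>i<n. \<forall>j<n.
           (\<Sum>k<n. \<Sum>k'<n. cnj (U k i) * of_nat (G l k k') * U k' j) =
           (if i = j then complex_of_real (S l (f i) / S 0 (f i)) else 0)))"

end

(* Since S is real, symmetric and orthogonal, the Verlinde formula makes each column of S a
   character of the fusion ring, so the fusion relations and G_0 = 1 hold automatically, and
   Tr G_l and Tr (G_l G_m) are sums over Exp(Z).  All seven invariants have Exp(Z) = {0, m0}
   with m0 in {1, 6, 7}, so n = 2.  The circulant matrices [[a, b], [b, a]] with a + b and a - b
   the two eigenvalues are diagonalised by the Hadamard matrix and give a matching nimrep.
   Conversely some primary l0 has eigenvalues lambda and -lambda, which forces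
   G_{l0} = lambda [[0, 1], [1, 0]]; pairing with it fixes all off-diagonal entries, and the
   traces then fix the diagonal ones, so the matching nimrep is unique. *)

theory Submission
  imports Defs "Jordan_Normal_Form.Determinant"
begin

lemma sum_lessThan_8: "(\<Sum>k<(8::nat). f k) = f 0 + f 1 + f 2 + f 3 + f 4 + f 5 + f 6 + f 7"
  by (simp add: numeral_eq_Suc lessThan_Suc add_ac)

lemma all_lessThan_8: "(\<forall>i<(8::nat). P i) \<longleftrightarrow> P 0 \<and> P 1 \<and> P 2 \<and> P 3 \<and> P 4 \<and> P 5 \<and> P 6 \<and> P 7"
  by (simp add: eval_nat_numeral All_less_Suc conj_ac)

lemma S_orthogonal:
  assumes "r < 8" "m < 8"
  shows "(\<Sum>v<8. S v r * S v m) = (if r = m then 1 else 0)"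
proof -
  have "\<forall>r<8. \<forall>m<8. (\<Sum>v<8. S v r * S v m) = (if r = m then 1 else 0)"
    unfolding all_lessThan_8 sum_lessThan_8 by (simp add: S_def S_int_def)
  then show ?thesis using assms by blast
qed

lemma S_0_nonzero:
  assumes "m < 8"
  shows "S 0 m \<noteq> 0"
proof -
  have "\<forall>m<8. S 0 m \<noteq> 0"
    unfolding all_lessThan_8 by (simp add: S_def S_int_def)
  then show ?thesis using assms by blast
qed

definition eigval :: "nat \<Rightarrow> nat \<Rightarrow> real" where
  "eigval l m = S l m / S 0 m"

lemma eigval_0: "m < 8 \<Longrightarrow> eigval 0 m = 1"
  by (simp add: eigval_def S_0_nonzero)

lemma eigval_mult:
  assumes m: "m < 8"
  shows "eigval a m * eigval b m = (\<Sum>v<8. N a b v * eigval v m)"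
proof -
  have "(\<Sum>v<8. N a b v * eigval v m)
      = (\<Sum>r<8. S a r * S b r / (S 0 r * S 0 m) * (\<Sum>v<8. S v r * S v m))"
    unfolding N_def eigval_def sum_distrib_left sum_distrib_right
    by (subst sum.swap) (auto intro!: sum.cong)
  also have "\<dots> = S a m * S b m / (S 0 m * S 0 m)"
  proof -
    have "\<And>r. r < 8 \<Longrightarrow> S a r * S b r / (S 0 r * S 0 m) * (\<Sum>v<8. S v r * S v m)
        = (if r = m then S a m * S b m / (S 0 m * S 0 m) else 0)"
      using m by (simp add: S_orthogonal)
    then have "(\<Sum>r<8. S a r * S b r / (S 0 r * S 0 m) * (\<Sum>v<8. S v r * S v m))
        = (\<Sum>r<8. if r = m then S a m * S b m / (S 0 m * S 0 m) else 0)"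
      by (intro sum.cong) auto
    then show ?thesis using m by simp
  qed
  also have "\<dots> = eigval a m * eigval b m"
    by (simp add: eigval_def)
  finally show ?thesis by (rule sym)
qed

lemma sum_by_multiplicity:
  fixes n :: nat
  assumes "\<forall>i<n. f i < (8::nat)"
  shows "(\<Sum>i<n. g (f i)) = (\<Sum>m<8. of_nat (card {i. i < n \<and> f i = m}) * (g m :: 'a::comm_semiring_1))"
proof -
  have "(\<Sum>i<n. g (f i)) = (\<Sum>i<n. \<Sum>m<8. if f i = m then g m else 0)"
    using assms by (intro sum.cong) (auto simp: sum.delta)
  also have "\<dots> = (\<Sum>m<8. \<Sum>i<n. if f i = m then g m else 0)"
    by (rule sum.swap)
  also have "\<dots> = (\<Sum>m<8. \<Sum>i\<in>{i \<in> {..<n}. f i = m}. g m)"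
    by (rule sum.cong[OF refl], rule sum.inter_filter[symmetric]) auto
  finally show ?thesis by simp
qed

definition cmat :: "nat \<Rightarrow> (nat \<Rightarrow> nat \<Rightarrow> complex) \<Rightarrow> complex mat" where
  "cmat n U = mat n n (\<lambda>(i, j). U i j)"

definition cadj :: "nat \<Rightarrow> (nat \<Rightarrow> nat \<Rightarrow> complex) \<Rightarrow> complex mat" where
  "cadj n U = mat n n (\<lambda>(i, j). cnj (U j i))"

definition nat_cmat :: "nat \<Rightarrow> (nat \<Rightarrow> nat \<Rightarrow> nat) \<Rightarrow> complex mat" where
  "nat_cmat n A = mat n n (\<lambda>(i, j). of_nat (A i j))"

lemma carrier_cmat [simp]: "cmat n U \<in> carrier_mat n n"
  and carrier_cadj [simp]: "cadj n U \<in> carrier_mat n n"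
  and carrier_nat_cmat [simp]: "nat_cmat n A \<in> carrier_mat n n"
  by (simp_all add: cmat_def cadj_def nat_cmat_def)

lemma dim_nat_cmat [simp]: "dim_row (nat_cmat n A) = n" "dim_col (nat_cmat n A) = n"
  and dim_cmat [simp]: "dim_row (cmat n U) = n" "dim_col (cmat n U) = n"
  and dim_cadj [simp]: "dim_row (cadj n U) = n" "dim_col (cadj n U) = n"
  and dim_mat_diag [simp]: "dim_row (mat_diag n g) = n" "dim_col (mat_diag n g) = n"
  by (simp_all add: nat_cmat_def cmat_def cadj_def mat_diag_def)

lemma index_nat_cmat [simp]: "i < n \<Longrightarrow> j < n \<Longrightarrow> nat_cmat n A $$ (i, j) = of_nat (A i j)"
  by (simp add: nat_cmat_def)

lemma unitary_mat_adjoint_mult: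
  assumes "unitary_mat n U"
  shows "cadj n U * cmat n U = 1\<^sub>m n"
  by (rule eq_matI)
    (use assms in \<open>auto simp: cadj_def cmat_def scalar_prod_def unitary_mat_def atLeast0LessThan\<close>)

lemma unitary_mat_mult_adjoint:
  assumes "unitary_mat n U"
  shows "cmat n U * cadj n U = 1\<^sub>m n"
  using mat_mult_left_right_inverse[OF carrier_cadj carrier_cmat unitary_mat_adjoint_mult[OF assms]] .

lemma index_unitary_conj_diag:
  assumes "i < n" "j < n"
  shows "(cmat n U * mat_diag n g * cadj n U) $$ (i, j) = (\<Sum>k<n. U i k * g k * cnj (U j k))"
  using assms
  by (simp add: mat_diag_mult_right[of _ n] cmat_def cadj_def scalar_prod_def atLeast0LessThan)

lemma index_nat_cmat_mult:
  assumes "i < n" "j < n"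
  shows "(nat_cmat n A * nat_cmat n B) $$ (i, j) = of_nat (\<Sum>k<n. A i k * B k j)"
  using assms by (simp add: nat_cmat_def scalar_prod_def atLeast0LessThan)

lemma nat_cmat_conj_diag_entry:
  assumes "nat_cmat n A = cmat n U * mat_diag n g * cadj n U" "i < n" "j < n"
  shows "of_nat (A i j) = (\<Sum>k<n. U i k * g k * cnj (U j k))"
proof -
  have "of_nat (A i j) = (cmat n U * mat_diag n g * cadj n U) $$ (i, j)"
    unfolding assms(1)[symmetric] using assms(2,3) by simp
  then show ?thesis
    by (simp only: index_unitary_conj_diag[OF assms(2,3)])
qed

lemma unitary_conj_diag_mult:
  assumes "unitary_mat n U"
  shows "(cmat n U * mat_diag n g * cadj n U) * (cmat n U * mat_diag n h * cadj n U)
    = cmat n U * mat_diag n (\<lambda>k. g k * h k) * cadj n U"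
proof -
  have "(cmat n U * mat_diag n g * cadj n U) * (cmat n U * mat_diag n h * cadj n U)
      = cmat n U * mat_diag n g * (cadj n U * cmat n U) * mat_diag n h * cadj n U"
    by (simp add: assoc_mult_mat[of _ n n _ n _ n] mult_carrier_mat[of _ n n _ n])
  then show ?thesis
    by (simp add: unitary_mat_adjoint_mult[OF assms] assoc_mult_mat[of _ n n _ n _ n]
        mult_carrier_mat[of _ n n _ n])
qed

lemma matches_spectral_decomposition:
  assumes "matches Z n G"
  obtains U f where "unitary_mat n U" "\<forall>i<n. f i < 8"
    "\<forall>m<8. int (card {i. i < n \<and> f i = m}) = Z m m"
    "\<And>l. l < 8 \<Longrightarrow>
       nat_cmat n (G l) = cmat n U * mat_diag n (\<lambda>k. of_real (eigval l (f k))) * cadj n U"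
proof -
  obtain U f where U: "unitary_mat n U" and f: "\<forall>i<n. f i < (8::nat)"
    and card: "\<forall>m<8. int (card {i. i < n \<and> f i = m}) = Z m m"
    and diag: "\<forall>l<8. \<forall>i<n. \<forall>j<n.
        (\<Sum>k<n. \<Sum>k'<n. cnj (U k i) * of_nat (G l k k') * U k' j) =
        (if i = j then complex_of_real (eigval l (f i)) else 0)"
    using assms unfolding matches_def eigval_def by blast
  have "nat_cmat n (G l) = cmat n U * mat_diag n (\<lambda>k. of_real (eigval l (f k))) * cadj n U"
    if l: "l < 8" for l
  proof -
    let ?A = "cadj n U" and ?B = "cmat n U" and ?G = "nat_cmat n (G l)"
    have "?A * ?G * ?B = mat_diag n (\<lambda>k. of_real (eigval l (f k)))"
    proof (rule eq_matI)
      fix i j assume ij: "i < dim_row (mat_diag n (\<lambda>k. complex_of_real (eigval l (f k))))"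
        "j < dim_col (mat_diag n (\<lambda>k. complex_of_real (eigval l (f k))))"
      then have ij: "i < n" "j < n" by (simp_all add: mat_diag_def)
      then have "(?A * ?G * ?B) $$ (i, j) = (\<Sum>k'<n. (\<Sum>k<n. cnj (U k i) * of_nat (G l k k')) * U k' j)"
        by (simp add: cadj_def cmat_def nat_cmat_def scalar_prod_def atLeast0LessThan)
      also have "\<dots> = (\<Sum>k<n. \<Sum>k'<n. cnj (U k i) * of_nat (G l k k') * U k' j)"
        unfolding sum_distrib_right by (rule sum.swap)
      finally show "(?A * ?G * ?B) $$ (i, j) = mat_diag n (\<lambda>k. complex_of_real (eigval l (f k))) $$ (i, j)"
        using diag l ij by (simp add: mat_diag_def)
    qed (auto simp: cadj_def cmat_def mat_diag_def)
    moreover have "?B * (?A * ?G * ?B) * ?A = (?B * ?A) * ?G * (?B * ?A)"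
      by (simp add: assoc_mult_mat[of _ n n _ n _ n] mult_carrier_mat[of _ n n _ n])
    ultimately show ?thesis
      using unitary_mat_mult_adjoint[OF U] by simp
  qed
  with that U f card show ?thesis by blast
qed

lemma matches_fusion:
  assumes G: "matches Z n G" and lm: "l < 8" "m < 8" and ij: "i < n" "j < n"
  shows "real (\<Sum>k<n. G l i k * G m k j) = (\<Sum>v<8. N l m v * real (G v i j))"
proof -
  obtain U f where U: "unitary_mat n U" and f: "\<forall>i<n. f i < (8::nat)"
    and "\<forall>m<8. int (card {i. i < n \<and> f i = m}) = Z m m"
    and decomp: "\<And>l. l < 8 \<Longrightarrow>
       nat_cmat n (G l) = cmat n U * mat_diag n (\<lambda>k. of_real (eigval l (f k))) * cadj n U"
    using matches_spectral_decomposition[OF G] by blast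
  let ?e = "\<lambda>l k. complex_of_real (eigval l (f k))"
  have fusion_eigval: "?e l k * ?e m k = (\<Sum>v<8. of_real (N l m v) * ?e v k)" if "k < n" for k
  proof -
    have "complex_of_real (eigval l (f k) * eigval m (f k)) = of_real (\<Sum>v<8. N l m v * eigval v (f k))"
      using f that by (simp add: eigval_mult)
    then show ?thesis by simp
  qed
  have "of_nat (\<Sum>k<n. G l i k * G m k j) = (nat_cmat n (G l) * nat_cmat n (G m)) $$ (i, j)"
    by (simp only: index_nat_cmat_mult[OF ij])
  also have "\<dots> = (\<Sum>k<n. U i k * (?e l k * ?e m k) * cnj (U j k))"
    unfolding decomp[OF lm(1)] decomp[OF lm(2)] unitary_conj_diag_mult[OF U]
    by (rule index_unitary_conj_diag[OF ij])
  also have "\<dots> = (\<Sum>k<n. \<Sum>v<8. of_real (N l m v) * (U i k * ?e v k * cnj (U j k)))"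
    by (intro sum.cong refl)
      (simp add: fusion_eigval sum_distrib_left sum_distrib_right mult_ac)
  also have "\<dots> = (\<Sum>v<8. of_real (N l m v) * (\<Sum>k<n. U i k * ?e v k * cnj (U j k)))"
    by (subst sum.swap) (simp add: sum_distrib_left)
  also have "\<dots> = (\<Sum>v<8. of_real (N l m v) * of_nat (G v i j))"
  proof (intro sum.cong refl)
    fix v :: nat assume "v \<in> {..<8}"
    then show "of_real (N l m v) * (\<Sum>k<n. U i k * ?e v k * cnj (U j k))
        = of_real (N l m v) * of_nat (G v i j)"
      using nat_cmat_conj_diag_entry[OF decomp ij] by simp
  qed
  finally have "complex_of_real (real (\<Sum>k<n. G l i k * G m k j))
      = of_real (\<Sum>v<8. N l m v * real (G v i j))"
    by simp
  then show ?thesis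
    by (simp only: of_real_eq_iff)
qed

lemma matches_trace:
  assumes G: "matches Z n G" and l: "l < 8"
  shows "real (\<Sum>i<n. G l i i) = (\<Sum>m<8. real_of_int (Z m m) * eigval l m)"
proof -
  obtain U f where U: "unitary_mat n U" and f: "\<forall>i<n. f i < (8::nat)"
    and card: "\<forall>m<8. int (card {i. i < n \<and> f i = m}) = Z m m"
    and decomp: "\<And>l. l < 8 \<Longrightarrow>
       nat_cmat n (G l) = cmat n U * mat_diag n (\<lambda>k. of_real (eigval l (f k))) * cadj n U"
    using matches_spectral_decomposition[OF G] by blast
  have "of_nat (\<Sum>i<n. G l i i) = (\<Sum>i<n. \<Sum>k<n. U i k * of_real (eigval l (f k)) * cnj (U i k))"
    unfolding of_nat_sum using nat_cmat_conj_diag_entry[OF decomp[OF l]] by simp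
  also have "\<dots> = (\<Sum>k<n. of_real (eigval l (f k)) * (\<Sum>i<n. cnj (U i k) * U i k))"
    unfolding sum_distrib_left by (subst sum.swap) (simp only: mult_ac)
  also have "\<dots> = (\<Sum>k<n. of_real (eigval l (f k)))"
    using U by (intro sum.cong refl) (simp add: unitary_mat_def)
  also have "\<dots> = of_real (\<Sum>k<n. eigval l (f k))"
    by simp
  finally have "complex_of_real (real (\<Sum>i<n. G l i i)) = of_real (\<Sum>k<n. eigval l (f k))"
    by (simp only: of_real_of_nat_eq)
  then have "real (\<Sum>i<n. G l i i) = (\<Sum>k<n. eigval l (f k))"
    by (simp only: of_real_eq_iff)
  also have "\<dots> = (\<Sum>m<8. of_nat (card {i. i < n \<and> f i = m}) * eigval l m)"
    by (rule sum_by_multiplicity[OF f])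
  also have "\<dots> = (\<Sum>m<8. real_of_int (Z m m) * eigval l m)"
    by (intro sum.cong refl) (simp add: card[rule_format, symmetric])
  finally show ?thesis .
qed

lemma matches_trace_mult:
  assumes G: "matches Z n G" and lm: "l < 8" "m < 8"
  shows "real (\<Sum>i<n. \<Sum>k<n. G l i k * G m k i)
    = (\<Sum>r<8. real_of_int (Z r r) * (eigval l r * eigval m r))"
proof -
  have "real (\<Sum>i<n. \<Sum>k<n. G l i k * G m k i) = (\<Sum>i<n. \<Sum>v<8. N l m v * real (G v i i))"
    using matches_fusion[OF G lm] by simp
  also have "\<dots> = (\<Sum>v<8. N l m v * (\<Sum>r<8. real_of_int (Z r r) * eigval v r))"
  proof (subst sum.swap, intro sum.cong refl)
    fix v assume "v \<in> {..<8::nat}"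
    then show "(\<Sum>i<n. N l m v * real (G v i i)) = N l m v * (\<Sum>r<8. real_of_int (Z r r) * eigval v r)"
      by (simp add: matches_trace[OF G, symmetric] sum_distrib_left)
  qed
  also have "\<dots> = (\<Sum>r<8. real_of_int (Z r r) * (\<Sum>v<8. N l m v * eigval v r))"
    unfolding sum_distrib_left by (subst sum.swap) (simp add: mult_ac)
  also have "\<dots> = (\<Sum>r<8. real_of_int (Z r r) * (eigval l r * eigval m r))"
    by (simp add: eigval_mult)
  finally show ?thesis .
qed

lemma matches_symmetric_imp_nimrep:
  assumes G: "matches Z n G" and sym: "\<forall>l<8. \<forall>i<n. \<forall>j<n. G l i j = G l j i"
  shows "nimrep n G"
  unfolding nimrep_def
proof (intro conjI sym allI impI)
  obtain U f where U: "unitary_mat n U" and f: "\<forall>i<n. f i < (8::nat)"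
    and "\<forall>m<8. int (card {i. i < n \<and> f i = m}) = Z m m"
    and decomp: "\<And>l. l < 8 \<Longrightarrow>
       nat_cmat n (G l) = cmat n U * mat_diag n (\<lambda>k. of_real (eigval l (f k))) * cadj n U"
    using matches_spectral_decomposition[OF G] by blast
  have "mat_diag n (\<lambda>k. complex_of_real (eigval 0 (f k))) = 1\<^sub>m n"
    using f by (auto simp: mat_diag_def eigval_0)
  then have "nat_cmat n (G 0) = 1\<^sub>m n"
    using decomp[of 0] unitary_mat_mult_adjoint[OF U] by simp
  then show "G 0 i j = (if i = j then 1 else 0)" if "i < n" "j < n" for i j
    using that by (auto simp: nat_cmat_def mat_eq_iff split: if_splits)
  show "real (\<Sum>k<n. G l i k * G m k j) = (\<Sum>v<8. N l m v * real (G v i j))"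
    if "l < 8" "m < 8" "i < n" "j < n" for l m i j
    using matches_fusion[OF G that] .
qed

lemma sum_lessThan_2: "(\<Sum>k<(2::nat). f k) = f 0 + f 1"
  by (simp add: numeral_eq_Suc)

lemma all_lessThan_2: "(\<forall>i<(2::nat). P i) \<longleftrightarrow> P 0 \<and> P 1"
  by (simp add: eval_nat_numeral All_less_Suc conj_ac)

lemma sym2_trace_zero:
  fixes a b c :: nat and x :: real
  assumes "real (a + c) = 0" "real (a * a + 2 * (b * b) + c * c) = 2 * x * x" "x > 0"
  shows "a = 0" "c = 0" "real b = x"
proof -
  show "a = 0" "c = 0" using assms(1) by simp_all
  then have "(real b)\<^sup>2 = x\<^sup>2" using assms(2) by (simp add: power2_eq_square)
  then show "real b = x" using assms(3) by (simp add: power2_eq_iff_nonneg)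
qed

lemma sym2_diagonal_eq:
  fixes a b c :: nat and x y :: real
  assumes "real (a + c) = x + y" "real (a * a + 2 * (b * b) + c * c) = x * x + y * y"
    "2 * real b = x - y"
  shows "2 * real a = x + y" "2 * real c = x + y"
proof -
  have "(real a - real c)\<^sup>2 = 2 * (real a * real a + real c * real c) - (real a + real c)\<^sup>2"
    by (simp add: power2_eq_square algebra_simps)
  also have "\<dots> = 2 * (x * x + y * y) - (2 * real b)\<^sup>2 - (x + y)\<^sup>2"
    using assms(1,2) by (simp add: power2_eq_square algebra_simps)
  also have "\<dots> = 0"
    unfolding assms(3) by (simp add: power2_eq_square algebra_simps)
  finally have "(real a - real c)\<^sup>2 = 0" .
  then show "2 * real a = x + y" "2 * real c = x + y" using assms(1) by simp_all
qed

(* H_{l0} has trace 0 and so equals lam l0 times the flip; Tr (H_{l0} H_l) then reads off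
   the off-diagonal entry of H_l. *)
lemma sym2_family_determined:
  fixes H :: "nat \<Rightarrow> nat \<Rightarrow> nat \<Rightarrow> nat" and lam mu :: "nat \<Rightarrow> real"
  assumes sym: "\<And>l. l \<in> L \<Longrightarrow> H l 1 0 = H l 0 1"
    and trace: "\<And>l. l \<in> L \<Longrightarrow> real (\<Sum>i<2. H l i i) = lam l + mu l"
    and trace_mult: "\<And>l m. l \<in> L \<Longrightarrow> m \<in> L \<Longrightarrow>
      real (\<Sum>i<2. \<Sum>k<2. H l i k * H m k i) = lam l * lam m + mu l * mu m"
    and l0: "l0 \<in> L" "mu l0 = - lam l0" "lam l0 > 0"
    and l: "l \<in> L" and ij: "i < 2" "j < 2"
  shows "2 * real (H l i j) = lam l + (if i = j then 1 else -1) * mu l"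
proof -
  have tr: "real (H m 0 0 + H m 1 1) = lam m + mu m" if "m \<in> L" for m
    using trace[OF that] by (simp add: sum_lessThan_2)
  have sq: "real (H m 0 0 * H m 0 0 + 2 * (H m 0 1 * H m 0 1) + H m 1 1 * H m 1 1)
      = lam m * lam m + mu m * mu m" if "m \<in> L" for m
    using trace_mult[OF that that] sym[OF that] by (simp add: sum_lessThan_2)
  have "real (H l0 0 0 + H l0 1 1) = 0"
    using tr[OF l0(1)] l0(2) by simp
  moreover have "real (H l0 0 0 * H l0 0 0 + 2 * (H l0 0 1 * H l0 0 1) + H l0 1 1 * H l0 1 1)
      = 2 * lam l0 * lam l0"
    using sq[OF l0(1)] l0(2) by simp
  ultimately have "H l0 0 0 = 0" "H l0 1 1 = 0" "real (H l0 0 1) = lam l0"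
    using sym2_trace_zero l0(3) by blast+
  then have "lam l0 * (2 * real (H l 0 1)) = lam l0 * (lam l - mu l)"
    using trace_mult[OF l0(1) l] sym[OF l0(1)] sym[OF l] l0(2)
    by (simp add: sum_lessThan_2 algebra_simps)
  then have off: "2 * real (H l 0 1) = lam l - mu l"
    using l0(3) by simp
  have diag: "2 * real (H l 0 0) = lam l + mu l" "2 * real (H l 1 1) = lam l + mu l"
    using sym2_diagonal_eq[OF tr[OF l] sq[OF l] off] by simp_all
  show ?thesis
    using ij off diag sym[OF l] by (auto simp: less_2_cases_iff)
qed

definition exponents_pair :: "(nat \<Rightarrow> nat \<Rightarrow> int) \<Rightarrow> nat \<Rightarrow> bool" where
  "exponents_pair Z m0 \<longleftrightarrow> 0 < m0 \<and> m0 < 8 \<and> (\<forall>m<8. Z m m = (if m = 0 \<or> m = m0 then 1 else 0))"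

lemma sum_exponents_pair:
  assumes "exponents_pair Z m0"
  shows "(\<Sum>m<8. real_of_int (Z m m) * g m) = g 0 + g m0"
proof -
  have "(\<Sum>m<8. real_of_int (Z m m) * g m)
      = (\<Sum>m<8. (if m = 0 then g m else 0) + (if m = m0 then g m else 0))"
    using assms by (intro sum.cong refl) (auto simp: exponents_pair_def)
  also have "\<dots> = g 0 + g m0"
    using assms by (simp add: sum.distrib exponents_pair_def)
  finally show ?thesis .
qed

lemma trace8_exponents_pair:
  assumes "exponents_pair Z m0"
  shows "trace8 Z = 2"
proof -
  have "real_of_int (trace8 Z) = 2"
    using sum_exponents_pair[OF assms, of "\<lambda>_. 1"] by (simp add: trace8_def)
  then show ?thesis by simp
qed

definition hadamard :: "nat \<Rightarrow> nat \<Rightarrow> real" where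
  "hadamard k i = (if k = 1 \<and> i = 1 then -1 else 1) / sqrt 2"

lemma unitary_hadamard: "unitary_mat 2 (\<lambda>k i. complex_of_real (hadamard k i))"
  by (simp add: unitary_mat_def all_lessThan_2 sum_lessThan_2 hadamard_def
      flip: of_real_mult of_real_add)

lemma hadamard_mult:
  "hadamard k i * x * hadamard k' j
    = (if k = 1 \<and> i = 1 then -1 else 1) * (if k' = 1 \<and> j = 1 then -1 else 1) * x / 2"
  by (simp add: hadamard_def)

lemma matches_circulant:
  assumes Z: "exponents_pair Z m0"
    and G: "\<And>l i j. G l i j = (if i = j then a l else b l)"
    and eig: "\<And>l. l < 8 \<Longrightarrow> real (a l) + real (b l) = eigval l 0"
      "\<And>l. l < 8 \<Longrightarrow> real (a l) - real (b l) = eigval l m0"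
  shows "matches Z 2 G"
  unfolding matches_def
proof (intro conjI exI[of _ "\<lambda>k i. complex_of_real (hadamard k i)"]
    exI[of _ "\<lambda>i. if i = 0 then 0 else m0"])
  show "int 2 = trace8 Z"
    using trace8_exponents_pair[OF Z] by simp
  show "unitary_mat 2 (\<lambda>k i. complex_of_real (hadamard k i))"
    by (rule unitary_hadamard)
  show "\<forall>i<2. (if i = 0 then 0 else m0) < 8"
    using Z by (simp add: exponents_pair_def)
  show "\<forall>m<8. int (card {i::nat. i < 2 \<and> (if i = 0 then 0 else m0) = m}) = Z m m"
  proof (intro allI impI)
    fix m :: nat assume "m < 8"
    have "{i::nat. i < 2 \<and> (if i = 0 then 0 else m0) = m}
        = (if m = 0 then {0} else if m = m0 then {1} else {})"
      using Z by (auto simp: exponents_pair_def less_2_cases_iff)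
    then show "int (card {i::nat. i < 2 \<and> (if i = 0 then 0 else m0) = m}) = Z m m"
      using Z \<open>m < 8\<close> by (auto simp: exponents_pair_def)
  qed
  show "\<forall>l<8. \<forall>i<2. \<forall>j<2.
      (\<Sum>k<2. \<Sum>k'<2. cnj (complex_of_real (hadamard k i)) * of_nat (G l k k')
        * complex_of_real (hadamard k' j))
      = (if i = j then complex_of_real (S l (if i = 0 then 0 else m0) / S 0 (if i = 0 then 0 else m0))
         else 0)"
  proof (intro allI impI)
    fix l i j :: nat assume l: "l < 8" and ij: "i < 2" "j < 2"
    have "(\<Sum>k<2. \<Sum>k'<2. cnj (complex_of_real (hadamard k i)) * of_nat (G l k k')
        * complex_of_real (hadamard k' j))
      = of_real (\<Sum>k<2. \<Sum>k'<2. hadamard k i * real (G l k k') * hadamard k' j)"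
      by simp
    also have "(\<Sum>k<2. \<Sum>k'<2. hadamard k i * real (G l k k') * hadamard k' j)
        = (if i = j then eigval l (if i = 0 then 0 else m0) else 0)"
      using ij eig[OF l] by (auto simp: less_2_cases_iff sum_lessThan_2 hadamard_mult G)
    finally show "(\<Sum>k<2. \<Sum>k'<2. cnj (complex_of_real (hadamard k i)) * of_nat (G l k k')
        * complex_of_real (hadamard k' j))
      = (if i = j then complex_of_real (S l (if i = 0 then 0 else m0) / S 0 (if i = 0 then 0 else m0))
         else 0)"
      by (simp add: eigval_def)
  qed
qed

definition circulant_nimrep :: "nat \<Rightarrow> nat \<Rightarrow> nat \<Rightarrow> nat \<Rightarrow> nat" where
  "circulant_nimrep m0 l i j = nat \<lfloor>(eigval l 0 + (if i = j then 1 else -1) * eigval l m0) / 2\<rfloor>"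

lemma real_nat_floor_Nats: "x \<in> \<nat> \<Longrightarrow> real (nat \<lfloor>x\<rfloor>) = x"
  by (auto elim: Nats_cases)

lemma unique_matching_nimrep:
  assumes Z: "exponents_pair Z m0"
    and half: "\<And>l. l < 8 \<Longrightarrow> (eigval l 0 + eigval l m0) / 2 \<in> \<nat> \<and> (eigval l 0 - eigval l m0) / 2 \<in> \<nat>"
    and l0: "l0 < 8" "eigval l0 m0 = - eigval l0 0" "eigval l0 0 > 0"
  shows "\<exists>G. nimrep (nat (trace8 Z)) G \<and> matches Z (nat (trace8 Z)) G \<and>
       (\<forall>H. nimrep (nat (trace8 Z)) H \<and> matches Z (nat (trace8 Z)) H \<longrightarrow>
              nimrep_equiv (nat (trace8 Z)) G H)"
proof -
  let ?G = "circulant_nimrep m0"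
  have G: "2 * real (?G l i j) = eigval l 0 + (if i = j then 1 else -1) * eigval l m0"
    if "l < 8" for l i j
    using half[OF that] by (simp add: circulant_nimrep_def real_nat_floor_Nats)
  have "matches Z 2 ?G"
  proof (rule matches_circulant[OF Z, where a = "\<lambda>l. ?G l 0 0" and b = "\<lambda>l. ?G l 0 1"])
    show "?G l i j = (if i = j then ?G l 0 0 else ?G l 0 1)" for l i j
      by (simp add: circulant_nimrep_def)
    show "real (?G l 0 0) + real (?G l 0 1) = eigval l 0"
      and "real (?G l 0 0) - real (?G l 0 1) = eigval l m0" if "l < 8" for l
      using G[OF that, of 0 0] G[OF that, of 0 1] by simp_all
  qed
  moreover have "nimrep 2 ?G"
    by (rule matches_symmetric_imp_nimrep[OF \<open>matches Z 2 ?G\<close>]) (simp add: circulant_nimrep_def eq_commute)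
  moreover have "nimrep_equiv 2 ?G H" if H: "nimrep 2 H" "matches Z 2 H" for H
  proof -
    have sym: "H l 1 0 = H l 0 1" if "l \<in> {..<8}" for l
      using H(1) that by (simp add: nimrep_def)
    have trace: "real (\<Sum>i<2. H l i i) = eigval l 0 + eigval l m0" if "l \<in> {..<8}" for l
      using matches_trace[OF H(2)] that by (simp add: sum_exponents_pair[OF Z])
    have trace_mult: "real (\<Sum>i<2. \<Sum>k<2. H l i k * H m k i)
        = eigval l 0 * eigval m 0 + eigval l m0 * eigval m m0"
      if "l \<in> {..<8}" "m \<in> {..<8}" for l m
      using matches_trace_mult[OF H(2)] that by (simp add: sum_exponents_pair[OF Z])
    have "H l i j = ?G l i j" if "l < 8" "i < 2" "j < 2" for l i j
      using sym2_family_determined[where lam = "\<lambda>l. eigval l 0" and mu = "\<lambda>l. eigval l m0"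
          and L = "{..<8}" and l = l and i = i and j = j, OF sym trace trace_mult _ l0(2,3)] G[of l i j] l0(1) that
      by simp
    then show ?thesis
      unfolding nimrep_equiv_def by (intro exI[of _ id]) auto
  qed
  ultimately show ?thesis
    using trace8_exponents_pair[OF Z] by auto
qed

lemma eigval_half_sums_Nats:
  assumes "m0 \<in> {1, 6, 7}" "l < 8"
  shows "(eigval l 0 + eigval l m0) / 2 \<in> \<nat> \<and> (eigval l 0 - eigval l m0) / 2 \<in> \<nat>"
proof -
  have "\<forall>l<8. (eigval l 0 + eigval l m0) / 2 \<in> \<nat> \<and> (eigval l 0 - eigval l m0) / 2 \<in> \<nat>"
    using assms(1) by (auto simp: all_lessThan_8 eigval_def S_def S_int_def)
  then show ?thesis using assms(2) by blast
qed

lemma eigval_antipodal: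
  assumes "m0 \<in> {1, 6, 7}"
  obtains l0 where "l0 < 8" "eigval l0 m0 = - eigval l0 0" "eigval l0 0 > 0"
proof -
  have "eigval 6 1 = - eigval 6 0" "eigval 6 0 > 0"
    "eigval 1 6 = - eigval 1 0" "eigval 1 7 = - eigval 1 0" "eigval 1 0 > 0"
    by (simp_all add: eigval_def S_def S_int_def)
  then show ?thesis using assms that[of 6] that[of 1] by auto
qed

lemma exponents_pair_modular_invariants:
  "exponents_pair Z3 1" "exponents_pair Z23 1" "exponents_pair Z32 1"
  "exponents_pair Z45 6" "exponents_pair Z54 6" "exponents_pair Zp45 7" "exponents_pair Zp54 7"
  by (simp_all add: exponents_pair_def all_lessThan_8 Z3_def Z23_def Z32_def Z45_def Z54_def
      Zp45_def Zp54_def outer_def E_def e_def s2_def s3_def s4_def s5_def)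

lemma unique_matching_nimrep_exponents_pair:
  assumes "exponents_pair Z m0" "m0 \<in> {1, 6, 7}"
  shows "\<exists>G. nimrep (nat (trace8 Z)) G \<and> matches Z (nat (trace8 Z)) G \<and>
       (\<forall>H. nimrep (nat (trace8 Z)) H \<and> matches Z (nat (trace8 Z)) H \<longrightarrow>
              nimrep_equiv (nat (trace8 Z)) G H)"
proof -
  obtain l0 where "l0 < 8" "eigval l0 m0 = - eigval l0 0" "eigval l0 0 > 0"
    using eigval_antipodal[OF assms(2)] .
  then show ?thesis
    using unique_matching_nimrep[OF assms(1) eigval_half_sums_Nats[OF assms(2)]] by blast
qed

theorem proposition6p4:
  shows "\<forall>Z \<in> {Z3, Z23, Z32, Z45, Z54, Zp45, Zp54}.
     \<exists>G. nimrep (nat (trace8 Z)) G \<and> matches Z (nat (trace8 Z)) G \<and>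
       (\<forall>H. nimrep (nat (trace8 Z)) H \<and> matches Z (nat (trace8 Z)) H \<longrightarrow>
              nimrep_equiv (nat (trace8 Z)) G H)"
  using exponents_pair_modular_invariants[THEN unique_matching_nimrep_exponents_pair] by simp

end
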